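(* Assume $\mathbb F$ is algebraically closed with $\operatorname{char}\mathbb F=0$. Let $a,b,c\in\mathbb F$ and $d\in\mathbb N$ be such that none of $a+b+c+1$, $-a+b+c$, $a-b+c$, $a+b-c$ lies in $\{\tfrac d2-i\mid i=1,\dots,d\}$. Then $A$ (resp. $B$, resp. $C$) is diagonalizable on $R_d(a,b,c)$ if and only if $a$ (resp. $b$, resp. $c$) does not belong to $\{\tfrac{i-d-1}{2}\mid i=1,2,\dots,2d-1\}$.
   Context: The Racah algebra $\Re$ is the unital associative $\mathbb F$-algebra with generators $A,B,C,D$ and relations $[A,B]=[B,C]=[C,A]=2D$ together with the requirement that each of $\alpha:=[A,D]+AC-BA$, $\beta:=[B,D]+BA-CB$, $\gamma:=[C,D]+CB-AC$ is central in $\Re$; $\delta:=A+B+C$. For $a,b,c\in\mathbb F$ and $d\in\mathbb N$ set $\theta_i=(a+\tfrac d2-i)(a+\tfrac d2-i+1)$, $\theta_i^*=(b+\tfrac d2-i)(b+\tfrac d2-i+1)$, $\varphi_i=i(i-d-1)(a+b+c+\tfrac d2-i+2)(a+b-c+\tfrac d2-i+1)$. $R_d(a,b,c)$ denotes the $(d+1)$-dimensional $\Re$-module with a basis $v_0,\dots,v_d$ such that $Av_i=\theta_iv_i+v_{i+1}$ ($v_{d+1}=0$), $Bv_i=\theta_i^*v_i+\varphi_iv_{i-1}$ ($v_{-1}=0$), and $\alpha,\beta,\delta$ act as the scalars $(c-b)(c+b+1)(a-\tfrac d2)(a+\tfrac d2+1)$, $(a-c)(a+c+1)(b-\tfrac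 d2)(b+\tfrac d2+1)$, $\tfrac d2(\tfrac d2+1)+a(a+1)+b(b+1)+c(c+1)$ respectively (exists, unique up to isomorphism). *)

theory Defs
  imports "Jordan_Normal_Form.Matrix" "HOL-Computational_Algebra.Polynomial"
begin

definition alg_closed_field :: "'a::field itself \<Rightarrow> bool" where
  "alg_closed_field _ \<longleftrightarrow> (\<forall>p :: 'a poly. degree p \<noteq> 0 \<longrightarrow> (\<exists>x. poly p x = 0))"

definition diagonalizable_mat :: "'a::field mat \<Rightarrow> bool" where
  "diagonalizable_mat M \<longleftrightarrow> (\<exists>D. diagonal_mat D \<and> similar_mat M D)"

definition racah_theta :: "'a::field \<Rightarrow> nat \<Rightarrow> nat \<Rightarrow> 'a" where
  "racah_theta a d i = (a + of_nat d / 2 - of_nat i) * (a + of_nat d / 2 - of_nat i + 1)"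

definition racah_phi :: "'a::field \<Rightarrow> 'a \<Rightarrow> 'a \<Rightarrow> nat \<Rightarrow> nat \<Rightarrow> 'a" where
  "racah_phi a b c d i = of_nat i * (of_nat i - of_nat d - 1)
     * (a + b + c + of_nat d / 2 - of_nat i + 2) * (a + b - c + of_nat d / 2 - of_nat i + 1)"

definition racah_delta :: "'a::field \<Rightarrow> 'a \<Rightarrow> 'a \<Rightarrow> nat \<Rightarrow> 'a" where
  "racah_delta a b c d = (of_nat d / 2) * (of_nat d / 2 + 1) + a * (a + 1) + b * (b + 1) + c * (c + 1)"

text \<open>Matrices (w.r.t. the basis v_0..v_d; column j = image of v_j) of A, B, C on R_d(a,b,c).
  C acts as delta - A - B since delta = A + B + C acts as a scalar.\<close>
definition racah_A :: "'a::field \<Rightarrow> 'a \<Rightarrow> 'a \<Rightarrow> nat \<Rightarrow> 'a mat" where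
  "racah_A a b c d = mat (Suc d) (Suc d)
     (\<lambda>(i, j). if i = j then racah_theta a d j else if i = j + 1 then 1 else 0)"

definition racah_B :: "'a::field \<Rightarrow> 'a \<Rightarrow> 'a \<Rightarrow> nat \<Rightarrow> 'a mat" where
  "racah_B a b c d = mat (Suc d) (Suc d)
     (\<lambda>(i, j). if i = j then racah_theta b d j else if i + 1 = j then racah_phi a b c d j else 0)"

definition racah_C :: "'a::field \<Rightarrow> 'a \<Rightarrow> 'a \<Rightarrow> nat \<Rightarrow> 'a mat" where
  "racah_C a b c d = racah_delta a b c d \<cdot>\<^sub>m 1\<^sub>m (Suc d) - racah_A a b c d - racah_B a b c d"

end

theory Submission
  imports Defs "Jordan_Normal_Form.Char_Poly"
begin

text \<open>
  The matrix of A and the transpose of the matrix of B are lower bidiagonal with diagonals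
  \<open>\<theta>\<^sub>i\<close> and \<open>\<theta>\<^sup>*\<^sub>i\<close>; the subdiagonal of the latter consists of the \<open>\<phi>\<^sub>i\<close>, which the hypothesis
  on a, b, c makes nonzero. An explicit upper unitriangular change of basis shows that C is
  similar to a lower bidiagonal matrix with diagonal \<open>\<theta>\<^sub>i\<close> taken at c and subdiagonal -1.

  A lower bidiagonal matrix M with nonzero subdiagonal is diagonalizable iff its diagonal
  entries are distinct. If they are, forward substitution yields an eigenbasis. If not, and M
  is diagonalizable, the product of \<open>M - \<lambda>\<close> over the k distinct eigenvalues \<open>\<lambda>\<close> vanishes; yet its
  entry in row k, column 0 is the product of the first k subdiagonal entries.

  Finally \<open>\<theta>\<^sub>i = \<theta>\<^sub>j\<close> with \<open>i \<noteq> j\<close> iff \<open>2a = i + j - d - 1\<close>, and \<open>i + j\<close> ranges over \<open>1, \<dots>, 2d - 1\<close>.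
\<close>

section \<open>Tridiagonal products and similarity\<close>

lemma sum_lessThan_neighbours:
  fixes f :: "nat \<Rightarrow> 'a::comm_monoid_add"
  assumes r: "r < n"
    and zero: "\<And>k. k < n \<Longrightarrow> k \<noteq> r \<Longrightarrow> Suc k \<noteq> r \<Longrightarrow> k \<noteq> Suc r \<Longrightarrow> f k = 0"
  shows "(\<Sum>k<n. f k) = f r + (if 0 < r then f (r - 1) else 0) + (if Suc r < n then f (Suc r) else 0)"
proof -
  define S where "S = {r} \<union> {k. 0 < r \<and> k = r - 1} \<union> {k. Suc r < n \<and> k = Suc r}"
  have "(\<Sum>k<n. f k) = (\<Sum>k\<in>S. f k)"
    by (rule sum.mono_neutral_right) (use r in \<open>auto simp: S_def intro!: zero\<close>)
  also have "\<dots> = f r + (if 0 < r then f (r - 1) else 0) + (if Suc r < n then f (Suc r) else 0)"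
    by (cases r) (auto simp: S_def insert_commute add_ac)
  finally show ?thesis .
qed

definition tridiagonal_mat :: "nat \<Rightarrow> 'a::zero mat \<Rightarrow> bool" where
  "tridiagonal_mat n M \<longleftrightarrow> M \<in> carrier_mat n n
     \<and> (\<forall>i<n. \<forall>j<n. j \<noteq> i \<and> Suc j \<noteq> i \<and> j \<noteq> Suc i \<longrightarrow> M $$ (i, j) = 0)"

lemma tridiagonal_mult_entry:
  assumes T: "tridiagonal_mat n M" and X: "X \<in> carrier_mat n m" and r: "r < n" and k: "k < m"
  shows "(M * X) $$ (r, k) = M $$ (r, r) * X $$ (r, k)
    + (if 0 < r then M $$ (r, r - 1) * X $$ (r - 1, k) else 0)
    + (if Suc r < n then M $$ (r, Suc r) * X $$ (Suc r, k) else 0)" (is "_ = ?rhs")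
proof -
  have "(M * X) $$ (r, k) = (\<Sum>j<n. M $$ (r, j) * X $$ (j, k))"
    using T X r k by (auto simp: tridiagonal_mat_def scalar_prod_def atLeast0LessThan)
  also have "\<dots> = ?rhs"
    by (rule sum_lessThan_neighbours[OF r]) (use T r in \<open>auto simp: tridiagonal_mat_def\<close>)
  finally show ?thesis .
qed

lemma mult_tridiagonal_entry:
  assumes T: "tridiagonal_mat n M" and X: "X \<in> carrier_mat m n" and r: "r < m" and k: "k < n"
  shows "(X * M) $$ (r, k) = X $$ (r, k) * M $$ (k, k)
    + (if 0 < k then X $$ (r, k - 1) * M $$ (k - 1, k) else 0)
    + (if Suc k < n then X $$ (r, Suc k) * M $$ (Suc k, k) else 0)" (is "_ = ?rhs")
proof -
  have "(X * M) $$ (r, k) = (\<Sum>j<n. X $$ (r, j) * M $$ (j, k))"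
    using T X r k by (auto simp: tridiagonal_mat_def scalar_prod_def atLeast0LessThan)
  also have "\<dots> = ?rhs"
    by (rule sum_lessThan_neighbours[OF k]) (use T k in \<open>auto simp: tridiagonal_mat_def\<close>)
  finally show ?thesis .
qed

lemma diagonal_imp_tridiagonal_mat:
  "D \<in> carrier_mat n n \<Longrightarrow> diagonal_mat D \<Longrightarrow> tridiagonal_mat n D"
  by (auto simp: tridiagonal_mat_def diagonal_mat_def)

lemma similar_mat_intertwine:
  fixes M N P :: "'a::field mat"
  assumes M: "M \<in> carrier_mat n n" and N: "N \<in> carrier_mat n n" and P: "P \<in> carrier_mat n n"
    and det: "det P \<noteq> 0" and MP: "M * P = P * N"
  shows "similar_mat M N"
proof -
  from det_non_zero_imp_unit[OF P det] obtain Q where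
    Q: "Q \<in> carrier_mat n n" and PQ: "P * Q = 1\<^sub>m n" and QP: "Q * P = 1\<^sub>m n"
    unfolding Units_def ring_mat_def by auto
  have "M = M * P * Q" using M P Q by (simp add: assoc_mult_mat[of M n n P n Q n] PQ)
  then have "M = P * N * Q" by (simp add: MP)
  then show ?thesis by (intro similar_matI[OF _ PQ QP]) (use M N P Q in auto)
qed

lemma similar_mat_diagonalizable_iff:
  "similar_mat M N \<Longrightarrow> diagonalizable_mat M \<longleftrightarrow> diagonalizable_mat N"
  using similar_mat_trans similar_mat_sym unfolding diagonalizable_mat_def by blast

lemma diagonalizable_transpose:
  assumes "diagonalizable_mat M"
  shows "diagonalizable_mat (transpose_mat M)"
proof -
  obtain D where dD: "diagonal_mat D" and "similar_mat M D"
    using assms unfolding diagonalizable_mat_def by auto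
  then obtain n P Q where cars: "{M, D, P, Q} \<subseteq> carrier_mat n n"
    and PQ: "P * Q = 1\<^sub>m n" and QP: "Q * P = 1\<^sub>m n" and MPDQ: "M = P * D * Q"
    using similar_matD by blast
  have D: "D \<in> carrier_mat n n" and P: "P \<in> carrier_mat n n" and Q: "Q \<in> carrier_mat n n"
    using cars by auto
  have "transpose_mat M = transpose_mat Q * transpose_mat D * transpose_mat P"
    unfolding MPDQ using D P Q by (simp add: transpose_mult[of _ n n _ n] assoc_mult_mat[of _ n n _ n _ n])
  moreover have "transpose_mat Q * transpose_mat P = 1\<^sub>m n"
    using transpose_mult[of P n n Q n] P Q PQ by simp
  moreover have "transpose_mat P * transpose_mat Q = 1\<^sub>m n"
    using transpose_mult[of Q n n P n] P Q QP by simp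
  ultimately have "similar_mat (transpose_mat M) (transpose_mat D)"
    by (intro similar_matI) (use cars in auto)
  moreover have "diagonal_mat (transpose_mat D)" using dD unfolding diagonal_mat_def by auto
  ultimately show ?thesis unfolding diagonalizable_mat_def by auto
qed

lemma diagonalizable_transpose_iff:
  "diagonalizable_mat (transpose_mat M) \<longleftrightarrow> diagonalizable_mat M"
  using diagonalizable_transpose[of M] diagonalizable_transpose[of "transpose_mat M"] by auto

section \<open>Unreduced lower bidiagonal matrices\<close>

definition unreduced_lower_bidiag :: "nat \<Rightarrow> 'a::zero mat \<Rightarrow> bool" where
  "unreduced_lower_bidiag n M \<longleftrightarrow> M \<in> carrier_mat n n
     \<and> (\<forall>i<n. \<forall>j<n. i \<noteq> j \<and> i \<noteq> Suc j \<longrightarrow> M $$ (i, j) = 0)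
     \<and> (\<forall>j. Suc j < n \<longrightarrow> M $$ (Suc j, j) \<noteq> 0)"

lemma unreduced_lower_bidiag_tridiagonal:
  "unreduced_lower_bidiag n M \<Longrightarrow> tridiagonal_mat n M"
  by (auto simp: unreduced_lower_bidiag_def tridiagonal_mat_def)

lemma unreduced_lower_bidiag_mult_entry:
  assumes L: "unreduced_lower_bidiag n M" and X: "X \<in> carrier_mat n m" and r: "r < n" and k: "k < m"
  shows "(M * X) $$ (r, k) = M $$ (r, r) * X $$ (r, k)
    + (if 0 < r then M $$ (r, r - 1) * X $$ (r - 1, k) else 0)"
  using tridiagonal_mult_entry[OF unreduced_lower_bidiag_tridiagonal[OF L] X r k] L r
  by (simp add: unreduced_lower_bidiag_def)

lemma unreduced_lower_bidiag_shift:
  fixes M :: "'a::field mat"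
  shows "unreduced_lower_bidiag n M \<Longrightarrow> unreduced_lower_bidiag n (M - x \<cdot>\<^sub>m 1\<^sub>m n)"
  by (auto simp: unreduced_lower_bidiag_def)

text \<open>For fixed \<open>k\<close>, the vector \<open>r \<mapsto> bidiag_eigvec M k r\<close> is an eigenvector for \<open>M $$ (k, k)\<close>,
  found by forward substitution; the division is by zero unless the diagonal is injective.\<close>

fun bidiag_eigvec :: "'a::field mat \<Rightarrow> nat \<Rightarrow> nat \<Rightarrow> 'a" where
  "bidiag_eigvec M k 0 = (if k = 0 then 1 else 0)"
| "bidiag_eigvec M k (Suc r) = (if Suc r < k then 0 else if Suc r = k then 1
     else M $$ (Suc r, r) * bidiag_eigvec M k r / (M $$ (k, k) - M $$ (Suc r, Suc r)))"

lemma bidiag_eigvec_less: "r < k \<Longrightarrow> bidiag_eigvec M k r = 0"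
  by (cases r) auto

lemma bidiag_eigvec_self: "bidiag_eigvec M k k = 1"
  by (cases k) auto

lemma bidiag_eigvec_eq:
  assumes inj: "inj_on (\<lambda>i. M $$ (i, i)) {..<n}" and r: "r < n" and k: "k < n"
  shows "M $$ (r, r) * bidiag_eigvec M k r
      + (if 0 < r then M $$ (r, r - 1) * bidiag_eigvec M k (r - 1) else 0)
    = bidiag_eigvec M k r * M $$ (k, k)"
proof (cases "r \<le> k")
  case True
  then show ?thesis by (cases "r = k") (auto simp: bidiag_eigvec_less bidiag_eigvec_self)
next
  case False
  then obtain q where q: "r = Suc q" and kq: "k \<le> q" by (cases r) auto
  have "M $$ (k, k) \<noteq> M $$ (Suc q, Suc q)"
    using inj kq q r k unfolding inj_on_def by (metis Suc_le_lessD lessThan_iff nat_neq_iff)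
  then show ?thesis using q kq by (simp add: field_simps)
qed

lemma unreduced_lower_bidiag_distinct_imp_diagonalizable:
  fixes M :: "'a::field mat"
  assumes L: "unreduced_lower_bidiag n M" and inj: "inj_on (\<lambda>i. M $$ (i, i)) {..<n}"
  shows "diagonalizable_mat M"
proof -
  define P where "P = mat n n (\<lambda>(r, k). bidiag_eigvec M k r)"
  define D where "D = mat n n (\<lambda>(i, j). if i = j then M $$ (i, i) else 0)"
  have M: "M \<in> carrier_mat n n" using L by (simp add: unreduced_lower_bidiag_def)
  have P: "P \<in> carrier_mat n n" and D: "D \<in> carrier_mat n n" and dD: "diagonal_mat D"
    by (auto simp: P_def D_def diagonal_mat_def)
  have "det P = prod_list (diag_mat P)"
    by (rule det_lower_triangular[OF _ P]) (simp add: P_def bidiag_eigvec_less)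
  also have "\<dots> = 1"
    by (rule prod_list_neutral) (auto simp: diag_mat_def P_def bidiag_eigvec_self)
  finally have "det P \<noteq> 0" by simp
  moreover have "M * P = P * D"
  proof (rule eq_matI)
    fix r k assume "r < dim_row (P * D)" "k < dim_col (P * D)"
    then have r: "r < n" and k: "k < n" using P D by auto
    have "(P * D) $$ (r, k) = bidiag_eigvec M k r * M $$ (k, k)"
      using mult_tridiagonal_entry[OF diagonal_imp_tridiagonal_mat[OF D dD] P r k] r k
      by (auto simp: P_def D_def)
    moreover have "(M * P) $$ (r, k) = M $$ (r, r) * bidiag_eigvec M k r
        + (if 0 < r then M $$ (r, r - 1) * bidiag_eigvec M k (r - 1) else 0)"
      using unreduced_lower_bidiag_mult_entry[OF L P r k] r k by (simp add: P_def)
    ultimately show "(M * P) $$ (r, k) = (P * D) $$ (r, k)"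
      using bidiag_eigvec_eq[OF inj r k] by simp
  qed (use P D M in auto)
  ultimately have "similar_mat M D" using similar_mat_intertwine[OF M D P] by blast
  with dD show ?thesis unfolding diagonalizable_mat_def by auto
qed

fun shift_prod_mat :: "'a::field mat \<Rightarrow> nat \<Rightarrow> 'a list \<Rightarrow> 'a mat" where
  "shift_prod_mat M n [] = 1\<^sub>m n"
| "shift_prod_mat M n (x # xs) = (M - x \<cdot>\<^sub>m 1\<^sub>m n) * shift_prod_mat M n xs"

lemma shift_prod_mat_carrier: "shift_prod_mat M n xs \<in> carrier_mat n n"
  by (induction xs) auto

lemma shift_intertwine:
  fixes M D P :: "'a::field mat"
  assumes M: "M \<in> carrier_mat n n" and D: "D \<in> carrier_mat n n" and P: "P \<in> carrier_mat n n"
    and MP: "M * P = P * D"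
  shows "(M - x \<cdot>\<^sub>m 1\<^sub>m n) * P = P * (D - x \<cdot>\<^sub>m 1\<^sub>m n)"
proof -
  have "(M - x \<cdot>\<^sub>m 1\<^sub>m n) * P = M * P - x \<cdot>\<^sub>m P"
    using minus_mult_distrib_mat[OF M _ P] mult_smult_assoc_mat[OF one_carrier_mat P] P by simp
  also have "\<dots> = P * (D - x \<cdot>\<^sub>m 1\<^sub>m n)"
    using mult_minus_distrib_mat[OF P D] mult_smult_distrib[OF P one_carrier_mat] P by (simp add: MP)
  finally show ?thesis .
qed

lemma shift_prod_mat_intertwine:
  fixes M D P :: "'a::field mat"
  assumes M: "M \<in> carrier_mat n n" and D: "D \<in> carrier_mat n n" and P: "P \<in> carrier_mat n n"
    and MP: "M * P = P * D"
  shows "shift_prod_mat M n xs * P = P * shift_prod_mat D n xs"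
proof (induction xs)
  case (Cons x xs)
  have MI: "M - x \<cdot>\<^sub>m 1\<^sub>m n \<in> carrier_mat n n" and DI: "D - x \<cdot>\<^sub>m 1\<^sub>m n \<in> carrier_mat n n"
    using M D by auto
  note cars = shift_prod_mat_carrier[of M n xs] shift_prod_mat_carrier[of D n xs]
  have "shift_prod_mat M n (x # xs) * P = (M - x \<cdot>\<^sub>m 1\<^sub>m n) * (P * shift_prod_mat D n xs)"
    using assoc_mult_mat[OF MI cars(1) P] by (simp add: Cons.IH)
  also have "\<dots> = P * shift_prod_mat D n (x # xs)"
    using assoc_mult_mat[OF MI P cars(2)] assoc_mult_mat[OF P DI cars(2)]
    by (simp add: shift_intertwine[OF M D P MP])
  finally show ?case .
qed (use P in simp)

lemma shift_prod_mat_diagonal: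
  fixes D :: "'a::field mat"
  assumes D: "D \<in> carrier_mat n n" and dD: "diagonal_mat D"
  shows "shift_prod_mat D n xs = mat n n (\<lambda>(i, j). if i = j then (\<Prod>x\<leftarrow>xs. D $$ (i, i) - x) else 0)"
proof (induction xs)
  case Nil
  show ?case by (rule eq_matI) auto
next
  case (Cons x xs)
  have T: "tridiagonal_mat n (D - x \<cdot>\<^sub>m 1\<^sub>m n)"
    using D dD by (intro diagonal_imp_tridiagonal_mat) (auto simp: diagonal_mat_def)
  let ?Y = "mat n n (\<lambda>(i, j). if i = j then (\<Prod>x\<leftarrow>xs. D $$ (i, i) - x) else 0)"
  let ?Z = "mat n n (\<lambda>(i, j). if i = j then (\<Prod>x\<leftarrow>x # xs. D $$ (i, i) - x) else 0)"
  show ?case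
  proof (rule eq_matI)
    fix i j assume "i < dim_row ?Z" "j < dim_col ?Z"
    then have i: "i < n" and j: "j < n" by auto
    have "shift_prod_mat D n (x # xs) $$ (i, j) = ((D - x \<cdot>\<^sub>m 1\<^sub>m n) * ?Y) $$ (i, j)"
      by (simp only: shift_prod_mat.simps Cons.IH)
    also have "\<dots> = (D $$ (i, i) - x) * ?Y $$ (i, j)"
      unfolding tridiagonal_mult_entry[OF T mat_carrier i j] using D dD i j
      by (auto simp: diagonal_mat_def)
    finally show "shift_prod_mat D n (x # xs) $$ (i, j) = ?Z $$ (i, j)"
      using i j by simp
  qed (use shift_prod_mat_carrier in auto)
qed

lemma shift_prod_mat_diagonal_zero:
  fixes D :: "'a::field mat"
  assumes D: "D \<in> carrier_mat n n" and dD: "diagonal_mat D"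
    and roots: "\<And>i. i < n \<Longrightarrow> D $$ (i, i) \<in> set xs"
  shows "shift_prod_mat D n xs = 0\<^sub>m n n"
  by (rule eq_matI) (auto simp: shift_prod_mat_diagonal[OF D dD] prod_list_zero_iff dest: roots)

lemma unreduced_lower_bidiag_shift_prod_col0:
  assumes L: "unreduced_lower_bidiag n M" and len: "length xs < n"
  shows "shift_prod_mat M n xs $$ (length xs, 0) = (\<Prod>k\<leftarrow>[0..<length xs]. M $$ (Suc k, k))"
    and "\<And>i. i < n \<Longrightarrow> length xs < i \<Longrightarrow> shift_prod_mat M n xs $$ (i, 0) = 0"
  using len
proof (induction xs)
  case (Cons x xs)
  let ?M = "M - x \<cdot>\<^sub>m 1\<^sub>m n"
  have M: "M \<in> carrier_mat n n" using L by (simp add: unreduced_lower_bidiag_def)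
  have entry: "shift_prod_mat M n (x # xs) $$ (i, 0) = ?M $$ (i, i) * shift_prod_mat M n xs $$ (i, 0)
      + (if 0 < i then ?M $$ (i, i - 1) * shift_prod_mat M n xs $$ (i - 1, 0) else 0)" if "i < n" for i
    using unreduced_lower_bidiag_mult_entry[OF unreduced_lower_bidiag_shift[OF L]
        shift_prod_mat_carrier that, of 0] that by simp
  {
    case 1
    show ?case using entry[OF 1] Cons.IH(1,2) 1 M by (simp add: mult.commute)
  next
    case (2 i)
    then show ?case using entry[of i] Cons.IH(2) by auto
  }
qed simp_all

lemma char_poly_lower_triangular:
  fixes M :: "'a::field mat"
  assumes M: "M \<in> carrier_mat n n" and low: "\<And>i j. i < j \<Longrightarrow> j < n \<Longrightarrow> M $$ (i, j) = 0"
  shows "char_poly M = (\<Prod>a\<leftarrow>diag_mat M. [:- a, 1:])"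
proof -
  have "char_poly (transpose_mat M) = (\<Prod>a\<leftarrow>diag_mat (transpose_mat M). [:- a, 1:])"
    by (rule char_poly_upper_triangular) (use M low in \<open>auto simp: upper_triangular_def\<close>)
  moreover have "diag_mat (transpose_mat M) = diag_mat M"
    using M by (auto simp: diag_mat_def)
  ultimately show ?thesis using M by simp
qed

lemma diagonalizable_lower_triangular_shift_prod_zero:
  fixes M :: "'a::field mat"
  assumes M: "M \<in> carrier_mat n n" and low: "\<And>i j. i < j \<Longrightarrow> j < n \<Longrightarrow> M $$ (i, j) = 0"
    and dg: "diagonalizable_mat M"
  shows "shift_prod_mat M n (remdups (diag_mat M)) = 0\<^sub>m n n"
proof -
  define xs where "xs = remdups (diag_mat M)"
  obtain D where dD: "diagonal_mat D" and sim: "similar_mat M D"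
    using dg unfolding diagonalizable_mat_def by auto
  from similar_matD[OF sim] obtain m P Q where cars: "{M, D, P, Q} \<subseteq> carrier_mat m m"
    and PQ: "P * Q = 1\<^sub>m m" and QP: "Q * P = 1\<^sub>m m" and MPDQ: "M = P * D * Q"
    by blast
  have "m = n" using cars M by auto
  then have D: "D \<in> carrier_mat n n" and P: "P \<in> carrier_mat n n" and Q: "Q \<in> carrier_mat n n"
    and PQ: "P * Q = 1\<^sub>m n" and QP: "Q * P = 1\<^sub>m n"
    using cars PQ QP by auto
  have MP: "M * P = P * D"
    using P D Q QP by (simp add: MPDQ assoc_mult_mat[of _ n n _ n _ n])
  have "char_poly D = (\<Prod>a\<leftarrow>diag_mat D. [:- a, 1:])"
    by (rule char_poly_lower_triangular[OF D]) (use dD D in \<open>auto simp: diagonal_mat_def\<close>)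
  then have cp: "(\<Prod>a\<leftarrow>diag_mat D. [:- a, 1:]) = (\<Prod>a\<leftarrow>diag_mat M. [:- a, 1:])"
    using char_poly_similar[OF sim] char_poly_lower_triangular[OF M low] by simp
  have roots: "D $$ (k, k) \<in> set xs" if k: "k < n" for k
  proof -
    have "poly (\<Prod>a\<leftarrow>diag_mat D. [:- a, 1:]) (D $$ (k, k)) = 0"
      using k D by (auto simp: poly_prod_list prod_list_zero_iff diag_mat_def)
    then show ?thesis
      unfolding cp by (auto simp: xs_def poly_prod_list prod_list_zero_iff)
  qed
  have "shift_prod_mat M n xs = shift_prod_mat M n xs * P * Q"
    using shift_prod_mat_carrier[of M n xs] P Q PQ by (simp add: assoc_mult_mat[of _ n n P n Q n])
  also have "\<dots> = P * shift_prod_mat D n xs * Q"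
    by (simp add: shift_prod_mat_intertwine[OF M D P MP])
  also have "\<dots> = 0\<^sub>m n n"
    using shift_prod_mat_diagonal_zero[OF D dD roots] P Q by simp
  finally show ?thesis unfolding xs_def .
qed

lemma unreduced_lower_bidiag_diagonalizable_imp_distinct:
  fixes M :: "'a::field mat"
  assumes L: "unreduced_lower_bidiag n M" and dg: "diagonalizable_mat M"
  shows "inj_on (\<lambda>i. M $$ (i, i)) {..<n}"
proof (rule ccontr)
  assume repeated: "\<not> inj_on (\<lambda>i. M $$ (i, i)) {..<n}"
  define xs where "xs = remdups (diag_mat M)"
  have M: "M \<in> carrier_mat n n" using L by (simp add: unreduced_lower_bidiag_def)
  have zero: "shift_prod_mat M n xs = 0\<^sub>m n n"
    unfolding xs_def using diagonalizable_lower_triangular_shift_prod_zero[OF M _ dg] L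
    by (simp add: unreduced_lower_bidiag_def)
  have "\<not> distinct (diag_mat M)"
    using repeated M by (auto simp: diag_mat_def distinct_map atLeast0LessThan)
  then have "card (set (diag_mat M)) < length (diag_mat M)"
    using card_distinct card_length[of "diag_mat M"] by (metis order.not_eq_order_implies_strict)
  then have len: "length xs < n"
    using M by (simp add: xs_def length_remdups_card_conv diag_mat_def)
  have "(\<Prod>k\<leftarrow>[0..<length xs]. M $$ (Suc k, k)) \<noteq> 0"
    using L len by (auto simp: unreduced_lower_bidiag_def prod_list_zero_iff)
  then show False
    using unreduced_lower_bidiag_shift_prod_col0(1)[OF L len] zero len by simp
qed

lemma unreduced_lower_bidiag_diagonalizable_iff:
  fixes M :: "'a::field mat"
  assumes "unreduced_lower_bidiag n M"
  shows "diagonalizable_mat M \<longleftrightarrow> inj_on (\<lambda>i. M $$ (i, i)) {..<n}"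
  using unreduced_lower_bidiag_diagonalizable_imp_distinct[OF assms]
    unreduced_lower_bidiag_distinct_imp_diagonalizable[OF assms] by blast

section \<open>The matrices of A and B\<close>

lemma racah_theta_diff:
  fixes x :: "'a::field_char_0"
  shows "racah_theta x d i - racah_theta x d j
    = (of_nat j - of_nat i) * (2 * x + of_nat d + 1 - of_nat i - of_nat j)"
  unfolding racah_theta_def by (simp add: field_simps)

lemma inj_on_racah_theta_iff:
  fixes x :: "'a::field_char_0"
  shows "inj_on (racah_theta x d) {..<Suc d}
    \<longleftrightarrow> x \<notin> {(of_nat i - of_nat d - 1) / 2 | i. i \<in> {1..2*d-1}}"
proof -
  have collide: "i \<noteq> j \<and> racah_theta x d i = racah_theta x d j
      \<longleftrightarrow> i \<noteq> j \<and> x = (of_nat (i + j) - of_nat d - 1) / 2" for i j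
  proof (cases "i = j")
    case False
    then have "(of_nat j - of_nat i :: 'a) \<noteq> 0" by simp
    have "racah_theta x d i = racah_theta x d j
        \<longleftrightarrow> (of_nat j - of_nat i) * (2 * x + of_nat d + 1 - of_nat i - of_nat j) = 0"
      by (simp only: racah_theta_diff[symmetric] right_minus_eq)
    also have "\<dots> \<longleftrightarrow> 2 * x + of_nat d + 1 - of_nat i - of_nat j = 0"
      using \<open>(of_nat j - of_nat i :: 'a) \<noteq> 0\<close> by simp
    also have "\<dots> \<longleftrightarrow> x = (of_nat (i + j) - of_nat d - 1) / 2"
      by (auto simp: field_simps)
    finally show ?thesis by simp
  qed simp
  have sums: "(\<exists>i\<le>d. \<exists>j\<le>d. i \<noteq> j \<and> i + j = k) \<longleftrightarrow> k \<in> {1..2*d-1}" for k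
  proof
    assume k: "k \<in> {1..2*d-1}"
    show "\<exists>i\<le>d. \<exists>j\<le>d. i \<noteq> j \<and> i + j = k"
    proof (cases "k \<le> d")
      case True
      then show ?thesis using k by (intro exI[of _ 0] exI[of _ k]) auto
    next
      case False
      then show ?thesis using k by (intro exI[of _ "k - d"] exI[of _ d]) auto
    qed
  qed auto
  have "\<not> inj_on (racah_theta x d) {..<Suc d}
      \<longleftrightarrow> (\<exists>i\<le>d. \<exists>j\<le>d. i \<noteq> j \<and> racah_theta x d i = racah_theta x d j)"
    unfolding inj_on_def lessThan_Suc_atMost by blast
  also have "\<dots> \<longleftrightarrow> (\<exists>i\<le>d. \<exists>j\<le>d. i \<noteq> j \<and> x = (of_nat (i + j) - of_nat d - 1) / 2)"
    by (simp only: collide)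
  also have "\<dots> \<longleftrightarrow> x \<in> {(of_nat k - of_nat d - 1) / 2 | k. k \<in> {1..2*d-1}}"
  proof
    assume "\<exists>i\<le>d. \<exists>j\<le>d. i \<noteq> j \<and> x = (of_nat (i + j) - of_nat d - 1) / 2"
    then obtain i j where "i \<le> d" "j \<le> d" "i \<noteq> j" and x: "x = (of_nat (i + j) - of_nat d - 1) / 2"
      by blast
    then have "i + j \<in> {1..2*d-1}" using sums by blast
    with x show "x \<in> {(of_nat k - of_nat d - 1) / 2 | k. k \<in> {1..2*d-1}}" by blast
  next
    assume "x \<in> {(of_nat k - of_nat d - 1) / 2 | k. k \<in> {1..2*d-1}}"
    then obtain k where "k \<in> {1..2*d-1}" and x: "x = (of_nat k - of_nat d - 1) / 2" by blast
    then obtain i j where "i \<le> d" "j \<le> d" "i \<noteq> j" "i + j = k" using sums by blast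
    with x show "\<exists>i\<le>d. \<exists>j\<le>d. i \<noteq> j \<and> x = (of_nat (i + j) - of_nat d - 1) / 2" by blast
  qed
  finally show ?thesis by blast
qed

lemma racah_A_unreduced_lower_bidiag: "unreduced_lower_bidiag (Suc d) (racah_A a b c d)"
  unfolding unreduced_lower_bidiag_def racah_A_def by auto

lemma racah_A_diag: "i < Suc d \<Longrightarrow> racah_A a b c d $$ (i, i) = racah_theta a d i"
  unfolding racah_A_def by auto

lemma racah_phi_nonzero:
  fixes a b c :: "'a::field_char_0"
  assumes h: "\<forall>x \<in> {a + b + c + 1, - a + b + c, a - b + c, a + b - c}.
           x \<notin> {of_nat d / 2 - of_nat i | i. i \<in> {1..d}}"
    and j: "1 \<le> j" "j \<le> d"
  shows "racah_phi a b c d j \<noteq> 0"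
proof -
  have dj: "d + 1 - j \<in> {1..d}" and cj: "(of_nat (d + 1 - j) :: 'a) = of_nat d + 1 - of_nat j"
    using j by (auto simp: of_nat_diff)
  have "(of_nat j :: 'a) \<noteq> of_nat (d + 1)" using j by (simp only: of_nat_eq_iff)
  then have "(of_nat j - of_nat d - 1 :: 'a) \<noteq> 0" by (simp add: algebra_simps)
  moreover have "a + b + c + of_nat d / 2 - of_nat j + 2 \<noteq> 0"
  proof
    assume "a + b + c + of_nat d / 2 - of_nat j + 2 = 0"
    then have "a + b + c + 1 = of_nat d / 2 - of_nat (d + 1 - j)" unfolding cj by (simp add: field_simps)
    then show False using h dj by blast
  qed
  moreover have "a + b - c + of_nat d / 2 - of_nat j + 1 \<noteq> 0"
  proof
    assume "a + b - c + of_nat d / 2 - of_nat j + 1 = 0"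
    then have "a + b - c = of_nat d / 2 - of_nat (d + 1 - j)" unfolding cj by (simp add: field_simps)
    then show False using h dj by blast
  qed
  moreover have "(of_nat j :: 'a) \<noteq> 0" using j by simp
  ultimately show ?thesis unfolding racah_phi_def by simp
qed

lemma racah_B_transpose_unreduced_lower_bidiag:
  fixes a b c :: "'a::field_char_0"
  assumes "\<forall>x \<in> {a + b + c + 1, - a + b + c, a - b + c, a + b - c}.
           x \<notin> {of_nat d / 2 - of_nat i | i. i \<in> {1..d}}"
  shows "unreduced_lower_bidiag (Suc d) (transpose_mat (racah_B a b c d))"
  unfolding unreduced_lower_bidiag_def racah_B_def using racah_phi_nonzero[OF assms] by auto

lemma racah_B_diag: "i < Suc d \<Longrightarrow> transpose_mat (racah_B a b c d) $$ (i, i) = racah_theta b d i"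
  unfolding racah_B_def by auto

section \<open>The matrix of C\<close>

text \<open>Column \<open>i\<close> of \<open>racah_PC_mat\<close> holds the coordinates of
  \<open>w\<^sub>i = (\<theta>\<^sub>i\<^sub>-\<^sub>1 - C) \<cdots> (\<theta>\<^sub>0 - C) v\<^sub>0\<close> (with \<open>\<theta>\<close> taken at c), so that \<open>C w\<^sub>i = \<theta>\<^sub>i w\<^sub>i - w\<^sub>i\<^sub>+\<^sub>1\<close>;
  the closed form makes \<open>w\<^sub>d\<^sub>+\<^sub>1 = 0\<close> visible through the factor \<open>d - k\<close> of \<open>racah_gC\<close>.\<close>

definition racah_gC :: "'a::field \<Rightarrow> 'a \<Rightarrow> 'a \<Rightarrow> nat \<Rightarrow> 'a \<Rightarrow> 'a" where
  "racah_gC a b c d x = (of_nat d - x) * (a + b + c + of_nat d / 2 + 1 - x)"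

definition racah_PC :: "'a::field \<Rightarrow> 'a \<Rightarrow> 'a \<Rightarrow> nat \<Rightarrow> nat \<Rightarrow> nat \<Rightarrow> 'a" where
  "racah_PC a b c d j i = of_nat (i choose j) * (\<Prod>k = j..<i. racah_gC a b c d (of_nat k))"

definition racah_PC_mat :: "'a::field \<Rightarrow> 'a \<Rightarrow> 'a \<Rightarrow> nat \<Rightarrow> 'a mat" where
  "racah_PC_mat a b c d = mat (Suc d) (Suc d) (\<lambda>(j, i). racah_PC a b c d j i)"

definition racah_LC :: "'a::field \<Rightarrow> nat \<Rightarrow> 'a mat" where
  "racah_LC c d = mat (Suc d) (Suc d)
     (\<lambda>(i, j). if i = j then racah_theta c d j else if i = Suc j then -1 else 0)"

lemma racah_phi_Suc:
  fixes a b c :: "'a::field_char_0"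
  shows "racah_phi a b c d (Suc r)
    = - (of_nat r + 1) * racah_gC a b c d (of_nat r) * (a + b - c + of_nat d / 2 - of_nat r)"
  unfolding racah_phi_def racah_gC_def by (simp add: field_simps)

lemma racah_C_eigen_identity:
  fixes a b c :: "'a::field_char_0" and d r i :: nat
  defines "R \<equiv> of_nat r :: 'a" and "I \<equiv> of_nat i :: 'a"
  shows "(I - R + 1) * (racah_delta a b c d - racah_theta a d r - racah_theta b d r - racah_theta c d i)
    - R * racah_gC a b c d (R - 1) + (I + 1) * racah_gC a b c d I
    + (I - R + 1) * (I - R) * (a + b - c + of_nat d / 2 - R) = 0"
  unfolding R_def I_def racah_delta_def racah_theta_def racah_gC_def by (simp add: field_simps)

lemma binomial_Suc_right_mult: "Suc r * (i choose Suc r) = (i - r) * (i choose r)"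
  by (metis binomial_absorb_comp binomial_absorption)

lemma racah_PC_prev:
  fixes a b c :: "'a::field_char_0"
  assumes "r \<le> i"
  shows "(of_nat i - of_nat r + 1) * (if 0 < r then racah_PC a b c d (r - 1) i else 0)
    = of_nat r * racah_gC a b c d (of_nat r - 1) * racah_PC a b c d r i"
proof (cases r)
  case (Suc m)
  have "(of_nat (Suc m * (i choose Suc m)) :: 'a) = of_nat ((i - m) * (i choose m))"
    by (simp only: binomial_Suc_right_mult)
  then have bin: "(of_nat i - of_nat r + 1) * of_nat (i choose m) = (of_nat r :: 'a) * of_nat (i choose r)"
    using assms Suc by (simp add: of_nat_diff algebra_simps)
  have PCm: "racah_PC a b c d m i
      = of_nat (i choose m) * racah_gC a b c d (of_nat r - 1) * (\<Prod>k = r..<i. racah_gC a b c d (of_nat k))"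
    using assms Suc by (simp add: racah_PC_def prod.atLeast_Suc_lessThan)
  have "(of_nat i - of_nat r + 1) * (if 0 < r then racah_PC a b c d (r - 1) i else 0)
      = ((of_nat i - of_nat r + 1) * of_nat (i choose m)) * racah_gC a b c d (of_nat r - 1)
        * (\<Prod>k = r..<i. racah_gC a b c d (of_nat k))"
    using Suc by (simp add: PCm mult.assoc)
  also have "\<dots> = of_nat r * racah_gC a b c d (of_nat r - 1) * racah_PC a b c d r i"
    by (simp only: bin) (simp add: racah_PC_def ac_simps)
  finally show ?thesis .
qed simp

lemma racah_phi_PC_next:
  fixes a b c :: "'a::field_char_0"
  assumes "r \<le> i"
  shows "racah_phi a b c d (Suc r) * racah_PC a b c d (Suc r) i
    = - (of_nat i - of_nat r) * (a + b - c + of_nat d / 2 - of_nat r) * racah_PC a b c d r i"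
proof (cases "r = i")
  case False
  let ?g = "racah_gC a b c d"
  define Q where "Q = (\<Prod>k = Suc r..<i. ?g (of_nat k))"
  have "(of_nat (Suc r * (i choose Suc r)) :: 'a) = of_nat ((i - r) * (i choose r))"
    by (simp only: binomial_Suc_right_mult)
  then have bin: "(of_nat r + 1) * of_nat (i choose Suc r) = (of_nat i - of_nat r :: 'a) * of_nat (i choose r)"
    using assms by (simp add: of_nat_diff algebra_simps)
  have "racah_phi a b c d (Suc r) * racah_PC a b c d (Suc r) i
      = - ((of_nat r + 1) * of_nat (i choose Suc r)) * (a + b - c + of_nat d / 2 - of_nat r) * (?g (of_nat r) * Q)"
    by (simp add: racah_PC_def racah_phi_Suc Q_def algebra_simps)
  also have "\<dots> = - ((of_nat i - of_nat r) * of_nat (i choose r)) * (a + b - c + of_nat d / 2 - of_nat r) * (?g (of_nat r) * Q)"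
    by (simp only: bin)
  also have "\<dots> = - (of_nat i - of_nat r) * (a + b - c + of_nat d / 2 - of_nat r)
      * (of_nat (i choose r) * (?g (of_nat r) * Q))"
    by (simp only: mult_minus_left mult_minus_right ac_simps)
  also have "of_nat (i choose r) * (?g (of_nat r) * Q) = racah_PC a b c d r i"
    using assms False by (simp add: racah_PC_def Q_def prod.atLeast_Suc_lessThan)
  finally show ?thesis .
qed (simp add: racah_PC_def)

lemma racah_PC_widen:
  fixes a b c :: "'a::field_char_0"
  assumes "r \<le> i"
  shows "(of_nat i - of_nat r + 1) * racah_PC a b c d r (Suc i)
    = (of_nat i + 1) * racah_gC a b c d (of_nat i) * racah_PC a b c d r i"
proof -
  have "(of_nat (Suc i - r) :: 'a) * of_nat (Suc i choose r) = of_nat (Suc i) * of_nat (i choose r)"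
    unfolding of_nat_mult[symmetric] using binomial_absorb_comp[of "Suc i" r] by simp
  then have bin: "(of_nat i - of_nat r + 1) * of_nat (Suc i choose r) = (of_nat i + 1 :: 'a) * of_nat (i choose r)"
    using assms by (simp add: of_nat_diff algebra_simps)
  have "(of_nat i - of_nat r + 1) * racah_PC a b c d r (Suc i)
      = ((of_nat i - of_nat r + 1) * of_nat (Suc i choose r))
        * (\<Prod>k = r..<i. racah_gC a b c d (of_nat k)) * racah_gC a b c d (of_nat i)"
    using assms by (simp add: racah_PC_def mult.assoc)
  then show ?thesis by (simp add: bin racah_PC_def)
qed

text \<open>Entry \<open>(r, i)\<close> of \<open>racah_C * racah_PC_mat = racah_PC_mat * racah_LC\<close>.\<close>

lemma racah_PC_recurrence:
  fixes a b c :: "'a::field_char_0"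
  shows "(racah_delta a b c d - racah_theta a d r - racah_theta b d r - racah_theta c d i) * racah_PC a b c d r i
    - (if 0 < r then racah_PC a b c d (r - 1) i else 0)
    - racah_phi a b c d (Suc r) * racah_PC a b c d (Suc r) i + racah_PC a b c d r (Suc i) = 0"
    (is "?K * ?p - ?prev - ?next + ?widen = 0")
proof -
  consider (above) "Suc i < r" | (corner) "r = Suc i" | (below) "r \<le> i" by linarith
  then show ?thesis
  proof cases
    case below
    have "(of_nat i - of_nat r + 1) * (?K * ?p - ?prev - ?next + ?widen)
      = (of_nat i - of_nat r + 1) * (?K * ?p) - (of_nat i - of_nat r + 1) * ?prev
        - (of_nat i - of_nat r + 1) * ?next + (of_nat i - of_nat r + 1) * ?widen"
      by (simp only: distrib_left right_diff_distrib)
    also have "\<dots> = ((of_nat i - of_nat r + 1) * ?K - of_nat r * racah_gC a b c d (of_nat r - 1)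
         + (of_nat i + 1) * racah_gC a b c d (of_nat i)
         + (of_nat i - of_nat r + 1) * (of_nat i - of_nat r) * (a + b - c + of_nat d / 2 - of_nat r)) * ?p"
      unfolding racah_PC_prev[OF below] racah_phi_PC_next[OF below] racah_PC_widen[OF below]
      by (simp add: field_simps)
    also have "\<dots> = 0"
      using racah_C_eigen_identity[where a=a and b=b and c=c and d=d and r=r and i=i] by simp
    finally have "(of_nat i - of_nat r + 1) * (?K * ?p - ?prev - ?next + ?widen) = 0" .
    moreover have "(of_nat (Suc i - r) :: 'a) \<noteq> 0"
      using below by (simp only: of_nat_eq_0_iff)
    then have "(of_nat i - of_nat r + 1 :: 'a) \<noteq> 0"
      using below by (simp add: of_nat_diff algebra_simps)
    ultimately show ?thesis by (simp only: mult_eq_0_iff) blast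
  qed (simp_all add: racah_PC_def binomial_eq_0)
qed

lemma racah_C_entry:
  assumes "r < Suc d" "k < Suc d"
  shows "racah_C a b c d $$ (r, k) =
    (if r = k then racah_delta a b c d - racah_theta a d k - racah_theta b d k
     else if r = Suc k then -1 else if Suc r = k then - racah_phi a b c d k else 0)"
  using assms unfolding racah_C_def racah_A_def racah_B_def by auto

lemma racah_C_tridiagonal: "tridiagonal_mat (Suc d) (racah_C a b c d)"
  by (auto simp: tridiagonal_mat_def racah_C_entry) (auto simp: racah_C_def racah_A_def racah_B_def)

lemma racah_LC_tridiagonal: "tridiagonal_mat (Suc d) (racah_LC c d)"
  by (auto simp: tridiagonal_mat_def racah_LC_def)

lemma racah_PC_last: "r \<le> d \<Longrightarrow> racah_PC a b c d r (Suc d) = 0"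
  unfolding racah_PC_def by (auto simp: racah_gC_def intro!: prod_zero bexI[of _ d])

lemma racah_C_similar_LC:
  fixes a b c :: "'a::field_char_0"
  shows "similar_mat (racah_C a b c d) (racah_LC c d)"
proof (rule similar_mat_intertwine)
  show C: "racah_C a b c d \<in> carrier_mat (Suc d) (Suc d)"
    and L: "racah_LC c d \<in> carrier_mat (Suc d) (Suc d)"
    and P: "racah_PC_mat a b c d \<in> carrier_mat (Suc d) (Suc d)"
    by (auto simp: racah_C_def racah_A_def racah_B_def racah_LC_def racah_PC_mat_def)
  have "det (racah_PC_mat a b c d) = prod_list (diag_mat (racah_PC_mat a b c d))"
    by (rule det_upper_triangular[OF _ P]) (auto simp: upper_triangular_def racah_PC_mat_def racah_PC_def)
  also have "\<dots> = 1"
    by (rule prod_list_neutral) (auto simp: diag_mat_def racah_PC_mat_def racah_PC_def)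
  finally show "det (racah_PC_mat a b c d) \<noteq> 0" by simp
  show "racah_C a b c d * racah_PC_mat a b c d = racah_PC_mat a b c d * racah_LC c d"
  proof (rule eq_matI)
    fix r i assume "r < dim_row (racah_PC_mat a b c d * racah_LC c d)"
      "i < dim_col (racah_PC_mat a b c d * racah_LC c d)"
    then have r: "r < Suc d" and i: "i < Suc d" using P L by auto
    have CP: "(racah_C a b c d * racah_PC_mat a b c d) $$ (r, i)
      = (racah_delta a b c d - racah_theta a d r - racah_theta b d r) * racah_PC a b c d r i
        - (if 0 < r then racah_PC a b c d (r - 1) i else 0)
        - racah_phi a b c d (Suc r) * racah_PC a b c d (Suc r) i"
      unfolding tridiagonal_mult_entry[OF racah_C_tridiagonal P r i] using r i
      by (auto simp: racah_C_entry racah_PC_mat_def racah_phi_def)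
    have PL: "(racah_PC_mat a b c d * racah_LC c d) $$ (r, i)
      = racah_PC a b c d r i * racah_theta c d i - racah_PC a b c d r (Suc i)"
      unfolding mult_tridiagonal_entry[OF racah_LC_tridiagonal P r i] using r i
      by (cases "i = d") (auto simp: racah_LC_def racah_PC_mat_def racah_PC_last)
    have "(racah_C a b c d * racah_PC_mat a b c d) $$ (r, i) - (racah_PC_mat a b c d * racah_LC c d) $$ (r, i)
      = (racah_delta a b c d - racah_theta a d r - racah_theta b d r - racah_theta c d i) * racah_PC a b c d r i
        - (if 0 < r then racah_PC a b c d (r - 1) i else 0)
        - racah_phi a b c d (Suc r) * racah_PC a b c d (Suc r) i + racah_PC a b c d r (Suc i)"
      unfolding CP PL by (simp add: algebra_simps)
    then show "(racah_C a b c d * racah_PC_mat a b c d) $$ (r, i)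
        = (racah_PC_mat a b c d * racah_LC c d) $$ (r, i)"
      by (simp only: racah_PC_recurrence right_minus_eq)
  qed (use C P L in auto)
qed

lemma racah_LC_unreduced_lower_bidiag: "unreduced_lower_bidiag (Suc d) (racah_LC c d)"
  unfolding unreduced_lower_bidiag_def racah_LC_def by auto

lemma racah_LC_diag: "i < Suc d \<Longrightarrow> racah_LC c d $$ (i, i) = racah_theta c d i"
  unfolding racah_LC_def by auto

theorem theorem6p6:
  fixes a b c :: "'a::field_char_0" and d :: nat
  assumes "alg_closed_field TYPE('a)"
    and "\<forall>x \<in> {a + b + c + 1, - a + b + c, a - b + c, a + b - c}.
           x \<notin> {of_nat d / 2 - of_nat i | i. i \<in> {1..d}}"
  shows "(diagonalizable_mat (racah_A a b c d) \<longleftrightarrow>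
            a \<notin> {(of_nat i - of_nat d - 1) / 2 | i. i \<in> {1..2*d-1}})
       \<and> (diagonalizable_mat (racah_B a b c d) \<longleftrightarrow>
            b \<notin> {(of_nat i - of_nat d - 1) / 2 | i. i \<in> {1..2*d-1}})
       \<and> (diagonalizable_mat (racah_C a b c d) \<longleftrightarrow>
            c \<notin> {(of_nat i - of_nat d - 1) / 2 | i. i \<in> {1..2*d-1}})"
proof (intro conjI)
  have "diagonalizable_mat (racah_A a b c d) \<longleftrightarrow> inj_on (\<lambda>i. racah_A a b c d $$ (i, i)) {..<Suc d}"
    by (rule unreduced_lower_bidiag_diagonalizable_iff[OF racah_A_unreduced_lower_bidiag])
  also have "\<dots> \<longleftrightarrow> inj_on (racah_theta a d) {..<Suc d}"
    by (rule inj_on_cong) (simp add: racah_A_diag)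
  finally show "diagonalizable_mat (racah_A a b c d) \<longleftrightarrow>
      a \<notin> {(of_nat i - of_nat d - 1) / 2 | i. i \<in> {1..2*d-1}}"
    by (simp only: inj_on_racah_theta_iff)
next
  have "diagonalizable_mat (racah_B a b c d) \<longleftrightarrow> diagonalizable_mat (transpose_mat (racah_B a b c d))"
    by (simp only: diagonalizable_transpose_iff)
  also have "\<dots> \<longleftrightarrow> inj_on (\<lambda>i. transpose_mat (racah_B a b c d) $$ (i, i)) {..<Suc d}"
    by (rule unreduced_lower_bidiag_diagonalizable_iff[OF racah_B_transpose_unreduced_lower_bidiag[OF assms(2)]])
  also have "\<dots> \<longleftrightarrow> inj_on (racah_theta b d) {..<Suc d}"
    by (rule inj_on_cong) (simp add: racah_B_diag)
  finally show "diagonalizable_mat (racah_B a b c d) \<longleftrightarrow>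
      b \<notin> {(of_nat i - of_nat d - 1) / 2 | i. i \<in> {1..2*d-1}}"
    by (simp only: inj_on_racah_theta_iff)
next
  have "diagonalizable_mat (racah_C a b c d) \<longleftrightarrow> diagonalizable_mat (racah_LC c d)"
    by (rule similar_mat_diagonalizable_iff[OF racah_C_similar_LC])
  also have "\<dots> \<longleftrightarrow> inj_on (\<lambda>i. racah_LC c d $$ (i, i)) {..<Suc d}"
    by (rule unreduced_lower_bidiag_diagonalizable_iff[OF racah_LC_unreduced_lower_bidiag])
  also have "\<dots> \<longleftrightarrow> inj_on (racah_theta c d) {..<Suc d}"
    by (rule inj_on_cong) (simp add: racah_LC_diag)
  finally show "diagonalizable_mat (racah_C a b c d) \<longleftrightarrow>
      c \<notin> {(of_nat i - of_nat d - 1) / 2 | i. i \<in> {1..2*d-1}}"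
    by (simp only: inj_on_racah_theta_iff)
qed

end
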